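(* Fix a monomial order on $S$. Let $J$ be an ideal of $S$ and $E$ a monomial ideal of $S$. Then $(J,\widehat E)$ is a G-nice pair. Moreover, if $\mathcal E^m_{J,E}\neq\emptyset$, then $\widehat E\in\mathcal E^m_{J,E}$ and $\widehat E$ is the smallest element of $\mathcal E^m_{J,E}$ with respect to inclusion.
   Context: $K$ is a field and $S=K[x_1,\ldots,x_n]$ with a fixed monomial order. For $0\neq f\in S$, $\mathrm{in}(f)$ denotes its leading monomial; for an ideal $I$, $\mathrm{in}(I)$ is the ideal generated by the leading monomials of the nonzero elements of $I$. A pair $(J,E)$ of ideals is G-nice if $\mathrm{in}(J+E)=\mathrm{in}(J)+\mathrm{in}(E)$. For an ideal $J$ and a monomial ideal $E$, $\widehat E$ (the G-nice monomial closure of $E$ with respect to $J$) is the intersection of all monomial ideals $F$ of $S$ with $E\subseteq F$ and $(J,F)$ G-nice. Also $\mathcal E^m_{J,E}$ is the set of monomial ideals $F$ of $S$ with $E\subseteq F$, $J+E=J+F$, and $(J,F)$ G-nice. *)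

theory Defs
  imports Main "HOL-Library.Poly_Mapping"
begin

(* Polynomial ring S = K[x_v : v in 'v], 'v a finite type of variables (n = CARD('v)); monomials are exponent vectors 'v =>0 nat, polynomials are finitely supported maps from monomials to K. *)

type_synonym ('v, 'k) mpoly = "('v \<Rightarrow>\<^sub>0 nat) \<Rightarrow>\<^sub>0 'k"

text \<open>Monomial order: a total order on monomials, compatible with multiplication,
  with 1 the least monomial (hence a well-order by Dickson's lemma).\<close>
definition monomial_order :: "(('v \<Rightarrow>\<^sub>0 nat) \<Rightarrow> ('v \<Rightarrow>\<^sub>0 nat) \<Rightarrow> bool) \<Rightarrow> bool" where
  "monomial_order le \<longleftrightarrow>
     (\<forall>a. le a a) \<and>
     (\<forall>a b. le a b \<and> le b a \<longrightarrow> a = b) \<and>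
     (\<forall>a b c. le a b \<and> le b c \<longrightarrow> le a c) \<and>
     (\<forall>a b. le a b \<or> le b a) \<and>
     (\<forall>a b c. le a b \<longrightarrow> le (a + c) (b + c)) \<and>
     (\<forall>a. le 0 a)"

definition is_ideal :: "('v, 'k::field) mpoly set \<Rightarrow> bool" where
  "is_ideal I \<longleftrightarrow> 0 \<in> I \<and> (\<forall>a\<in>I. \<forall>b\<in>I. a + b \<in> I) \<and> (\<forall>a\<in>I. \<forall>r. r * a \<in> I)"

definition ideal_gen :: "('v, 'k::field) mpoly set \<Rightarrow> ('v, 'k) mpoly set" where
  "ideal_gen G = \<Inter> {I. is_ideal I \<and> G \<subseteq> I}"

definition ideal_sum :: "('v, 'k::field) mpoly set \<Rightarrow> ('v, 'k) mpoly set \<Rightarrow> ('v, 'k) mpoly set" where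
  "ideal_sum I J = {a + b | a b. a \<in> I \<and> b \<in> J}"

definition is_monomial_ideal :: "('v, 'k::field) mpoly set \<Rightarrow> bool" where
  "is_monomial_ideal F \<longleftrightarrow> (\<exists>M. F = ideal_gen ((\<lambda>m. Poly_Mapping.single m 1) ` M))"

definition lead_mon :: "(('v \<Rightarrow>\<^sub>0 nat) \<Rightarrow> ('v \<Rightarrow>\<^sub>0 nat) \<Rightarrow> bool) \<Rightarrow> ('v, 'k::field) mpoly \<Rightarrow> ('v \<Rightarrow>\<^sub>0 nat)" where
  "lead_mon le f = (THE m. m \<in> Poly_Mapping.keys f \<and> (\<forall>m'\<in>Poly_Mapping.keys f. le m' m))"

definition init_ideal :: "(('v \<Rightarrow>\<^sub>0 nat) \<Rightarrow> ('v \<Rightarrow>\<^sub>0 nat) \<Rightarrow> bool) \<Rightarrow> ('v, 'k::field) mpoly set \<Rightarrow> ('v, 'k) mpoly set" where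
  "init_ideal le I = ideal_gen {Poly_Mapping.single (lead_mon le f) 1 | f. f \<in> I \<and> f \<noteq> 0}"

definition G_nice :: "(('v \<Rightarrow>\<^sub>0 nat) \<Rightarrow> ('v \<Rightarrow>\<^sub>0 nat) \<Rightarrow> bool) \<Rightarrow> ('v, 'k::field) mpoly set \<Rightarrow> ('v, 'k) mpoly set \<Rightarrow> bool" where
  "G_nice le J E \<longleftrightarrow> init_ideal le (ideal_sum J E) = ideal_sum (init_ideal le J) (init_ideal le E)"

definition Gnice_closure :: "(('v \<Rightarrow>\<^sub>0 nat) \<Rightarrow> ('v \<Rightarrow>\<^sub>0 nat) \<Rightarrow> bool) \<Rightarrow> ('v, 'k::field) mpoly set \<Rightarrow> ('v, 'k) mpoly set \<Rightarrow> ('v, 'k) mpoly set" where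
  "Gnice_closure le J E = \<Inter> {F. is_monomial_ideal F \<and> E \<subseteq> F \<and> G_nice le J F}"

definition Em_family :: "(('v \<Rightarrow>\<^sub>0 nat) \<Rightarrow> ('v \<Rightarrow>\<^sub>0 nat) \<Rightarrow> bool) \<Rightarrow> ('v, 'k::field) mpoly set \<Rightarrow> ('v, 'k) mpoly set \<Rightarrow> ('v, 'k) mpoly set set" where
  "Em_family le J E = {F. is_monomial_ideal F \<and> E \<subseteq> F \<and> ideal_sum J E = ideal_sum J F \<and> G_nice le J F}"

end

theory Submission
  imports Defs
begin

(* Write C for the closure, the intersection of all monomial ideals F \<supseteq> E with (J, F) G-nice.
   Monomial ideals are exactly the ideals containing every monomial occurring in their elements,
   so C is again a monomial ideal. If 0 \<noteq> f \<in> J + C and in(f) \<notin> in(J), then for each such F we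
   have f \<in> J + F, hence in(f) \<in> in(J) + in(F); a monomial in a sum of monomial ideals lies in
   one of the summands, so in(f) \<in> in(F) \<subseteq> F. Thus in(f) \<in> C and (J, C) is G-nice, so C is the
   least member of its defining family. Every F in \<E>^m_{J,E} belongs to that family, and
   J + E \<subseteq> J + C \<subseteq> J + F = J + E puts C into \<E>^m_{J,E}. *)

lemma is_ideal_ideal_gen: "is_ideal (ideal_gen G)"
  unfolding ideal_gen_def is_ideal_def by auto

lemma ideal_gen_subset: "G \<subseteq> ideal_gen G"
  unfolding ideal_gen_def by auto

lemma ideal_gen_least: "is_ideal I \<Longrightarrow> G \<subseteq> I \<Longrightarrow> ideal_gen G \<subseteq> I"
  unfolding ideal_gen_def by auto

lemma ideal_gen_mono: "G \<subseteq> H \<Longrightarrow> ideal_gen G \<subseteq> ideal_gen H"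
  unfolding ideal_gen_def by auto

lemma is_ideal_Inter: "\<forall>I\<in>A. is_ideal I \<Longrightarrow> is_ideal (\<Inter>A)"
  unfolding is_ideal_def by auto

lemma is_ideal_ideal_sum:
  fixes I J :: "('v, 'k::field) mpoly set"
  assumes "is_ideal I" "is_ideal J"
  shows "is_ideal (ideal_sum I J)"
  unfolding is_ideal_def ideal_sum_def
proof (intro conjI ballI allI)
  show "0 \<in> {a + b |a b. a \<in> I \<and> b \<in> J}"
    using assms unfolding is_ideal_def by force
next
  fix x y assume "x \<in> {a + b |a b. a \<in> I \<and> b \<in> J}" "y \<in> {a + b |a b. a \<in> I \<and> b \<in> J}"
  then obtain a b c d where "x = a + b" "y = c + d" "a \<in> I" "b \<in> J" "c \<in> I" "d \<in> J"
    by blast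
  moreover have "x + y = (a + c) + (b + d)"
    using \<open>x = a + b\<close> \<open>y = c + d\<close> by (simp add: algebra_simps)
  ultimately show "x + y \<in> {a + b |a b. a \<in> I \<and> b \<in> J}"
    using assms unfolding is_ideal_def by blast
next
  fix x r assume "x \<in> {a + b |a b. a \<in> I \<and> b \<in> J}"
  then obtain a b where "x = a + b" "a \<in> I" "b \<in> J" by blast
  moreover have "r * x = r * a + r * b" using \<open>x = a + b\<close> by (simp add: algebra_simps)
  ultimately show "r * x \<in> {a + b |a b. a \<in> I \<and> b \<in> J}"
    using assms unfolding is_ideal_def by blast
qed

lemma ideal_sum_least: "is_ideal K \<Longrightarrow> I \<subseteq> K \<Longrightarrow> J \<subseteq> K \<Longrightarrow> ideal_sum I J \<subseteq> K"
  unfolding ideal_sum_def is_ideal_def by blast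

lemma ideal_sum_upper1: "is_ideal J \<Longrightarrow> I \<subseteq> ideal_sum I J"
  unfolding ideal_sum_def is_ideal_def by force

lemma ideal_sum_upper2: "is_ideal I \<Longrightarrow> J \<subseteq> ideal_sum I J"
  unfolding ideal_sum_def is_ideal_def by force

lemma ideal_sum_mono: "J \<subseteq> J' \<Longrightarrow> ideal_sum I J \<subseteq> ideal_sum I J'"
  unfolding ideal_sum_def by blast

lemma poly_mapping_sum_single_lookup:
  fixes p :: "'a \<Rightarrow>\<^sub>0 'b::comm_monoid_add"
  shows "(\<Sum>k\<in>Poly_Mapping.keys p. Poly_Mapping.single k (Poly_Mapping.lookup p k)) = p"
proof -
  have lookup_sum: "finite A \<Longrightarrow>
      Poly_Mapping.lookup (\<Sum>k\<in>A. Poly_Mapping.single k (Poly_Mapping.lookup p k)) j =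
      (if j \<in> A then Poly_Mapping.lookup p j else 0)" for A j
    by (induction A rule: finite_induct) (auto simp: lookup_single lookup_add when_def)
  show ?thesis
    by (rule poly_mapping_eqI) (simp add: lookup_sum in_keys_iff)
qed

lemma mem_ideal_if_monomials_mem:
  fixes I :: "('v, 'k::field) mpoly set"
  assumes I: "is_ideal I" and monomials: "\<forall>m\<in>Poly_Mapping.keys p. Poly_Mapping.single m 1 \<in> I"
  shows "p \<in> I"
proof -
  have "(\<Sum>m\<in>B. Poly_Mapping.single m (Poly_Mapping.lookup p m)) \<in> I"
    if "finite B" "B \<subseteq> Poly_Mapping.keys p" for B
    using that
  proof (induction B rule: finite_induct)
    case empty
    then show ?case using I unfolding is_ideal_def by simp
  next
    case (insert m B)
    have "Poly_Mapping.single 0 (Poly_Mapping.lookup p m) * Poly_Mapping.single m 1 \<in> I"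
      using I monomials insert.prems unfolding is_ideal_def by blast
    then have "Poly_Mapping.single m (Poly_Mapping.lookup p m) \<in> I"
      by (simp add: mult_single)
    then show ?case using insert I unfolding is_ideal_def by simp
  qed
  then show ?thesis
    using poly_mapping_sum_single_lookup[of p] by (metis order_refl finite_keys)
qed

lemma is_monomial_ideal_iff:
  fixes I :: "('v, 'k::field) mpoly set"
  shows "is_monomial_ideal I \<longleftrightarrow>
    is_ideal I \<and> (\<forall>p\<in>I. \<forall>m\<in>Poly_Mapping.keys p. Poly_Mapping.single m 1 \<in> I)"
proof
  assume "is_monomial_ideal I"
  then obtain M where M: "I = ideal_gen ((\<lambda>m. Poly_Mapping.single m (1::'k)) ` M)"
    unfolding is_monomial_ideal_def by blast
  then have I: "is_ideal I" using is_ideal_ideal_gen by blast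
  define T where "T = {q :: ('v, 'k) mpoly. \<forall>m\<in>Poly_Mapping.keys q. Poly_Mapping.single m 1 \<in> I}"
  have "is_ideal T"
    unfolding is_ideal_def
  proof (intro conjI ballI allI)
    show "0 \<in> T" unfolding T_def by simp
  next
    fix a b assume "a \<in> T" "b \<in> T"
    then show "a + b \<in> T" unfolding T_def using keys_add[of a b] by blast
  next
    fix a r assume a: "a \<in> T"
    show "r * a \<in> T" unfolding T_def mem_Collect_eq
    proof
      fix m assume "m \<in> Poly_Mapping.keys (r * a)"
      then obtain m1 m2 where m: "m = m1 + m2" "m2 \<in> Poly_Mapping.keys a"
        using keys_mult[of r a] by blast
      have "Poly_Mapping.single m2 1 \<in> I" using a m unfolding T_def by blast
      then have "Poly_Mapping.single m1 1 * Poly_Mapping.single m2 1 \<in> I"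
        using I unfolding is_ideal_def by blast
      then show "Poly_Mapping.single m (1::'k) \<in> I" by (simp add: mult_single m)
    qed
  qed
  moreover have "(\<lambda>m. Poly_Mapping.single m (1::'k)) ` M \<subseteq> T"
    unfolding T_def using M ideal_gen_subset by fastforce
  ultimately have "I \<subseteq> T" using M ideal_gen_least by blast
  with I show "is_ideal I \<and> (\<forall>p\<in>I. \<forall>m\<in>Poly_Mapping.keys p. Poly_Mapping.single m 1 \<in> I)"
    unfolding T_def by blast
next
  assume I: "is_ideal I \<and> (\<forall>p\<in>I. \<forall>m\<in>Poly_Mapping.keys p. Poly_Mapping.single m 1 \<in> I)"
  define G where "G = (\<lambda>m. Poly_Mapping.single m (1::'k)) ` {m. Poly_Mapping.single m 1 \<in> I}"
  have "G \<subseteq> I" unfolding G_def by blast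
  then have "ideal_gen G \<subseteq> I" using I ideal_gen_least by blast
  moreover have "I \<subseteq> ideal_gen G"
  proof
    fix p assume p: "p \<in> I"
    have "\<forall>m\<in>Poly_Mapping.keys p. Poly_Mapping.single m 1 \<in> G"
      using I p unfolding G_def by blast
    then have "\<forall>m\<in>Poly_Mapping.keys p. Poly_Mapping.single m 1 \<in> ideal_gen G"
      using ideal_gen_subset by blast
    then show "p \<in> ideal_gen G" by (rule mem_ideal_if_monomials_mem[OF is_ideal_ideal_gen])
  qed
  ultimately have "I = ideal_gen G" by (rule antisym[rotated])
  then show "is_monomial_ideal I"
    unfolding is_monomial_ideal_def G_def by (rule exI)
qed

lemma is_monomial_ideal_Inter: "\<forall>F\<in>A. is_monomial_ideal F \<Longrightarrow> is_monomial_ideal (\<Inter>A)"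
  unfolding is_monomial_ideal_iff by (auto intro: is_ideal_Inter)

lemma single_mem_ideal_sum_monomial:
  fixes A B :: "('v, 'k::field) mpoly set"
  assumes "is_monomial_ideal A" "is_monomial_ideal B"
    and "Poly_Mapping.single m 1 \<in> ideal_sum A B"
  shows "Poly_Mapping.single m 1 \<in> A \<or> Poly_Mapping.single m 1 \<in> B"
proof -
  obtain a b where ab: "Poly_Mapping.single m 1 = a + b" "a \<in> A" "b \<in> B"
    using assms(3) unfolding ideal_sum_def by blast
  have "m \<in> Poly_Mapping.keys (a + b)"
    by (simp flip: ab(1))
  then have "m \<in> Poly_Mapping.keys a \<or> m \<in> Poly_Mapping.keys b"
    using keys_add[of a b] by blast
  then show ?thesis
    using assms(1,2) ab(2,3) unfolding is_monomial_ideal_iff by blast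
qed

lemma monomial_orderD:
  assumes "monomial_order le"
  shows "le a a" "le a b \<Longrightarrow> le b a \<Longrightarrow> a = b" "le a b \<Longrightarrow> le b c \<Longrightarrow> le a c"
    "le a b \<or> le b a"
  using assms unfolding monomial_order_def by blast+

lemma monomial_order_has_max:
  assumes mo: "monomial_order le" and "finite A" "A \<noteq> {}"
  shows "\<exists>m\<in>A. \<forall>m'\<in>A. le m' m"
  using assms(2,3)
proof (induction A rule: finite_ne_induct)
  case (singleton x)
  then show ?case using monomial_orderD(1)[OF mo] by auto
next
  case (insert x F)
  then obtain m where m: "m \<in> F" "\<forall>m'\<in>F. le m' m" by blast
  show ?case
  proof (cases "le x m")
    case True
    then show ?thesis using m by auto
  next
    case False
    then have "le m x" using monomial_orderD(4)[OF mo, of x m] by blast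
    then have "\<forall>m'\<in>insert x F. le m' x" using m monomial_orderD(1,3)[OF mo] by blast
    then show ?thesis by blast
  qed
qed

lemma lead_mon_in_keys:
  assumes mo: "monomial_order le" and "f \<noteq> 0"
  shows "lead_mon le f \<in> Poly_Mapping.keys f"
proof -
  obtain m where m: "m \<in> Poly_Mapping.keys f" "\<forall>m'\<in>Poly_Mapping.keys f. le m' m"
    using monomial_order_has_max[OF mo finite_keys[of f]] assms(2) by auto
  have "lead_mon le f = m"
    unfolding lead_mon_def
    by (rule the_equality) (use m monomial_orderD(2)[OF mo] in blast)+
  with m show ?thesis by simp
qed

lemma lead_mon_single:
  assumes "monomial_order le"
  shows "lead_mon le (Poly_Mapping.single m (1::'k::field)) = m"
  unfolding lead_mon_def keys_single
  using monomial_orderD(1)[OF assms] by (intro the_equality) auto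

lemma single_lead_mon_mem_init_ideal:
  "f \<in> I \<Longrightarrow> f \<noteq> 0 \<Longrightarrow> Poly_Mapping.single (lead_mon le f) 1 \<in> init_ideal le I"
  unfolding init_ideal_def by (rule subsetD[OF ideal_gen_subset]) blast

lemma single_mem_init_ideal:
  assumes "monomial_order le" and "Poly_Mapping.single m (1::'k::field) \<in> I"
  shows "Poly_Mapping.single m 1 \<in> init_ideal le I"
proof -
  have "Poly_Mapping.single m (1::'k) \<noteq> 0"
    by (metis lookup_single_eq lookup_zero one_neq_zero)
  then show ?thesis
    using single_lead_mon_mem_init_ideal[OF assms(2), of le]
    by (simp add: lead_mon_single[OF assms(1)])
qed

lemma is_ideal_init_ideal: "is_ideal (init_ideal le I)"
  unfolding init_ideal_def by (rule is_ideal_ideal_gen)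

lemma is_monomial_ideal_init_ideal: "is_monomial_ideal (init_ideal le I)"
  unfolding init_ideal_def is_monomial_ideal_def
  by (rule exI[of _ "{lead_mon le f | f. f \<in> I \<and> f \<noteq> 0}"]) (rule arg_cong[where f = ideal_gen], blast)

lemma init_ideal_mono: "I \<subseteq> I' \<Longrightarrow> init_ideal le I \<subseteq> init_ideal le I'"
  unfolding init_ideal_def by (rule ideal_gen_mono) blast

lemma init_ideal_subset_monomial_ideal:
  assumes "monomial_order le" and "is_monomial_ideal F"
  shows "init_ideal le F \<subseteq> F"
  unfolding init_ideal_def
  using assms lead_mon_in_keys[OF assms(1)] unfolding is_monomial_ideal_iff
  by (intro ideal_gen_least) blast+

lemma G_nice_iff_subset:
  assumes "is_ideal J" "is_ideal F"
  shows "G_nice le J F \<longleftrightarrow>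
    init_ideal le (ideal_sum J F) \<subseteq> ideal_sum (init_ideal le J) (init_ideal le F)"
proof -
  have "init_ideal le J \<subseteq> init_ideal le (ideal_sum J F)"
    "init_ideal le F \<subseteq> init_ideal le (ideal_sum J F)"
    using assms by (simp_all add: init_ideal_mono ideal_sum_upper1 ideal_sum_upper2)
  then have "ideal_sum (init_ideal le J) (init_ideal le F) \<subseteq> init_ideal le (ideal_sum J F)"
    by (intro ideal_sum_least is_ideal_init_ideal)
  then show ?thesis unfolding G_nice_def by blast
qed

lemma G_nice_Inter:
  fixes J :: "('v, 'k::field) mpoly set"
  assumes mo: "monomial_order le" and J: "is_ideal J"
    and A: "\<forall>F\<in>A. is_monomial_ideal F \<and> G_nice le J F"
  shows "G_nice le J (\<Inter>A)"
proof -
  let ?C = "\<Inter>A"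
  let ?inJ = "init_ideal le J"
  have C: "is_monomial_ideal ?C" using A is_monomial_ideal_Inter by blast
  have "Poly_Mapping.single (lead_mon le f) 1 \<in> ideal_sum ?inJ (init_ideal le ?C)"
    if f: "f \<in> ideal_sum J ?C" "f \<noteq> 0" for f
  proof (cases "Poly_Mapping.single (lead_mon le f) 1 \<in> ?inJ")
    case True
    then show ?thesis using ideal_sum_upper1[OF is_ideal_init_ideal] by blast
  next
    case False
    have "Poly_Mapping.single (lead_mon le f) 1 \<in> F" if F: "F \<in> A" for F
    proof -
      from F A have F_mon: "is_monomial_ideal F" and F_nice: "G_nice le J F" by blast+
      have "f \<in> ideal_sum J F" using ideal_sum_mono[of ?C F] F f(1) by blast
      then have "Poly_Mapping.single (lead_mon le f) 1 \<in> init_ideal le (ideal_sum J F)"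
        using f(2) by (rule single_lead_mon_mem_init_ideal)
      then have "Poly_Mapping.single (lead_mon le f) 1 \<in> ideal_sum ?inJ (init_ideal le F)"
        using F_nice unfolding G_nice_def by simp
      then have "Poly_Mapping.single (lead_mon le f) 1 \<in> init_ideal le F"
        using single_mem_ideal_sum_monomial[OF is_monomial_ideal_init_ideal is_monomial_ideal_init_ideal]
          False by blast
      then show ?thesis using init_ideal_subset_monomial_ideal[OF mo F_mon] by blast
    qed
    then have "Poly_Mapping.single (lead_mon le f) 1 \<in> init_ideal le ?C"
      by (intro single_mem_init_ideal[OF mo] InterI)
    then show ?thesis using ideal_sum_upper2[OF is_ideal_init_ideal] by blast
  qed
  then have "init_ideal le (ideal_sum J ?C) \<subseteq> ideal_sum ?inJ (init_ideal le ?C)"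
    unfolding init_ideal_def[of le "ideal_sum J ?C"]
    by (intro ideal_gen_least is_ideal_ideal_sum is_ideal_init_ideal) blast
  moreover have "is_ideal ?C" using C is_monomial_ideal_iff by blast
  ultimately show ?thesis using G_nice_iff_subset[OF J] by blast
qed

lemma Gnice_closure_subset:
  "is_monomial_ideal F \<Longrightarrow> E \<subseteq> F \<Longrightarrow> G_nice le J F \<Longrightarrow> Gnice_closure le J E \<subseteq> F"
  unfolding Gnice_closure_def by blast

lemma Gnice_closure_superset: "E \<subseteq> Gnice_closure le J E"
  unfolding Gnice_closure_def by blast

lemma
  fixes J E :: "('v, 'k::field) mpoly set"
  assumes "monomial_order le" and "is_ideal J"
  shows is_monomial_ideal_Gnice_closure: "is_monomial_ideal (Gnice_closure le J E)"
    and G_nice_Gnice_closure: "G_nice le J (Gnice_closure le J E)"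
  unfolding Gnice_closure_def
  by (simp_all add: is_monomial_ideal_Inter G_nice_Inter[OF assms])

theorem mainTheorem11:
  fixes le :: "('v::finite \<Rightarrow>\<^sub>0 nat) \<Rightarrow> ('v \<Rightarrow>\<^sub>0 nat) \<Rightarrow> bool"
    and J E :: "('v, 'k::field) mpoly set"
  assumes "monomial_order le"
    and "is_ideal J"
    and "is_monomial_ideal E"
  shows "G_nice le J (Gnice_closure le J E)
    \<and> (Em_family le J E \<noteq> {} \<longrightarrow>
         Gnice_closure le J E \<in> Em_family le J E
         \<and> (\<forall>F\<in>Em_family le J E. Gnice_closure le J E \<subseteq> F))"
proof (intro conjI impI)
  let ?C = "Gnice_closure le J E"
  show "G_nice le J ?C" using G_nice_Gnice_closure[OF assms(1,2)] .
  show least: "\<forall>F\<in>Em_family le J E. ?C \<subseteq> F"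
  proof
    fix F assume "F \<in> Em_family le J E"
    then show "?C \<subseteq> F" unfolding Em_family_def by (intro Gnice_closure_subset) auto
  qed
  assume "Em_family le J E \<noteq> {}"
  then obtain F where F: "F \<in> Em_family le J E" by blast
  have "ideal_sum J ?C \<subseteq> ideal_sum J F"
    using least F by (simp add: ideal_sum_mono)
  also have "\<dots> = ideal_sum J E" using F unfolding Em_family_def by simp
  finally have "ideal_sum J E = ideal_sum J ?C"
    using ideal_sum_mono[OF Gnice_closure_superset] by (rule antisym[rotated])
  then show "?C \<in> Em_family le J E"
    unfolding Em_family_def
    using is_monomial_ideal_Gnice_closure[OF assms(1,2)] G_nice_Gnice_closure[OF assms(1,2)]
      Gnice_closure_superset by blast
qed

end
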